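(* Let $M$ be an $n$-player Dec-POMDP satisfying hierarchical information sharing (HIS), fix a stage $\tau$, an occupancy state $s_\tau$ and a function $\beta_\tau$, and consider the single-stage subgame $G_{s_\tau}^{\beta_\tau}$ and the common-payoff perfect-information extensive-form game $\bar G_{s_\tau}^{\beta_\tau}$ (both defined in the context). Define functions $\beta^{i,*}_\tau$, $i=n,n-1,\dots,1$, on nodes of player $i$ and actions $u^i_\tau\in U^i$ by $$\beta^{n,*}_\tau(\varsigma^n_\tau,u^n_\tau)=R(\varsigma^n_\tau,u^n_\tau),\qquad \beta^{i,*}_\tau(\varsigma^i_\tau,u^i_\tau)=\mathbb{E}_{\varsigma^{i+1}_\tau\sim T(\cdot\mid \varsigma^i_\tau,u^i_\tau)}\Big\{\max_{u^{i+1}_\tau\in U^{i+1}}\beta^{i+1,*}_\tau(\varsigma^{i+1}_\tau,u^{i+1}_\tau)\Big\}\ (i<n).$$ Then: (a) these functions are the optimal action-value functions of $\bar G_{s_\tau}^{\beta_\tau}$ (i.e. they solve Bellman's optimality equations of $\bar G_{s_\tau}^{\beta_\tau}$), and the optimal value of $\bar G_{s_\tau}^{\beta_\tau}$, namely $\mathbb{E}_{\varsigma^1_\tau}\{\max_{u^1_\tau}\beta^{1,*}_\tau(\varsigma^1_\tau,u^1_\tau)\}$ with $\varsigma^1_\tau=(s_\tau,o^1_\tau)$ and $o^1_\tau$ distributed according to the marginal of $s_\tau$, equals the optimal value $\max_{a_\tau}Q_{\beta_\tau}(s_\tau,a_\tau)$ of $G_{s_\tau}^{\beta_\tau}$; (b)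 any optimal solution of $\bar G_{s_\tau}^{\beta_\tau}$ is also an optimal solution of $G_{s_\tau}^{\beta_\tau}$: if $\sigma$ assigns an action to every node so as to maximize the expected payoff of $\bar G_{s_\tau}^{\beta_\tau}$, then the joint decision rule defined recursively for $i=1,\dots,n$ by $a^i_\tau(o^i_\tau)=\sigma(\varsigma^i_\tau)$ with $\varsigma^i_\tau=\langle s_\tau,o^{1:i}_\tau,a^{1:i-1}_\tau(o^{1:i-1}_\tau)\rangle$ maximizes $Q_{\beta_\tau}(s_\tau,\cdot)$; (c) in particular, the greedy decision rules defined recursively for $i=1,\dots,n$ by $$a^{i,*}_\tau(o^i_\tau)\in\arg\max_{u^i_\tau\in U^i}\beta^{i,*}_\tau(\varsigma^i_\tau,u^i_\tau),\qquad \varsigma^i_\tau=\langle s_\tau,o^{1:i}_\tau,a^{1:i-1,*}_\tau(o^{1:i-1}_\tau)\rangle,$$ form a joint decision rule $a^*_\tau=(a^{1,*}_\tau,\dots,a^{n,*}_\tau)$ that is optimal for $G_{s_\tau}^{\beta_\tau}$.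
   Context: An $n$-player Dec-POMDP is $M=\langle n,X,U,Z,p,r,s_0,\gamma,\ell\rangle$: $X$ a finite set of hidden states; $U^i$ a finite action set of player $i$, $U=U^1\times\dots\times U^n$; $Z^i$ a finite observation set of player $i$, $Z=Z^1\times\dots\times Z^n$; $p(y,z\mid x,u)$ the probability of moving from state $x$ to state $y$ and receiving joint observation $z$ after joint action $u$; $r\colon X\times U\to\mathbb{R}$ the reward; $s_0$ an initial distribution on $X$; $\gamma$ a discount factor; $\ell$ the number of stages. The private history of player $i$ at stage $\tau$ is $o^i_\tau=(u^i_{0:\tau-1},z^i_{1:\tau})$ (with $o^i_0=\emptyset$) and the joint history is $o_\tau=(o^1_\tau,\dots,o^n_\tau)$. Hierarchical information sharing (HIS): for every player $i>1$ there is a map $\zeta^i$ with $\zeta^i(z^i_\tau)=(u^{i-1}_{\tau-1},z^{i-1}_\tau)$, so that the private history $o^i_\tau$ of player $i$ determines the private histories $o^{1}_\tau,\dots,o^{i-1}_\tau$ of all players below it (player $n$'s history determines the joint history). A private decision rule $a^i_\tau$ maps private histories $o^i_\tau$ to actions in $U^i$; a joint decision rule is $a_\tau=(a^1_\tau,\dots,a^n_\tau)$ with $a_\tau(o)=(a^1_\tau(o^1),\dots,a^n_\tau(o^n))$; we write $a^{1:i}_\tau(o^{1:i}_\tau)=(a^1_\tau(o^1_\tau),\dots,a^i_\tau(o^i_\tau))$. An occupancy state $s_\tau$ is a probability distribution over pairs $(x,o)$ of a hidden state and a joint $\tau$-step history. Given a function $\beta_\tau\colon(x,o,u)\mapsto\beta_\tau(x,o,u)\in\mathbb{R}$,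 set $Q_{\beta_\tau}(s_\tau,a_\tau)=\sum_{x,o}s_\tau(x,o)\,\beta_\tau(x,o,a_\tau(o))$. The single-stage subgame $G_{s_\tau}^{\beta_\tau}$ is the common-payoff game in which the $n$ players choose a joint decision rule $a_\tau$ to maximize $Q_{\beta_\tau}(s_\tau,a_\tau)$. The extensive-form game $\bar G_{s_\tau}^{\beta_\tau}$: a central planner acts for players $1,2,\dots,n$ in turn. Nodes of player $1$ are $\varsigma^1_\tau=(s_\tau,o^1_\tau)$, reached with the marginal probability of $o^1_\tau$ under $s_\tau$; at a node $\varsigma^i_\tau$ of player $i$ the planner chooses $u^i_\tau\in U^i$, and for $i<n$ the game moves to the node $\varsigma^{i+1}_\tau=(\varsigma^i_\tau,u^i_\tau,o^{i+1}_\tau)$ of player $i+1$ with probability $T(\varsigma^{i+1}_\tau\mid\varsigma^i_\tau,u^i_\tau)=\Pr\{o^{i+1}_\tau\mid s_\tau,o^1_\tau,\dots,o^i_\tau\}$ (computed from $s_\tau$). After player $n$ chooses $u^n_\tau$ at $\varsigma^n_\tau$, the common payoff is $R(\varsigma^n_\tau,u^n_\tau)=\mathbb{E}_{x\sim\Pr\{\cdot\mid\varsigma^n_\tau,u^n_\tau\}}\{\beta_\tau(x,o,u)\}$, where $o=(o^1_\tau,\dots,o^n_\tau)$ and $u=(u^1_\tau,\dots,u^n_\tau)$ are read off the node and $\Pr\{x\mid\varsigma^n_\tau\}=s_\tau(x\mid o)$. The optimal action-value function of player $i$ gives, at node $\varsigma^i_\tau$ and action $u^i_\tau$, the maximal expected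 payoff obtainable after playing $u^i_\tau$ there. *)

theory Defs
  imports Complex_Main
begin

(* Conventions: players are indexed 0..n-1 (paper: 1..n).
   A private history o^i_tau = (u^i_{0:tau-1}, z^i_{1:tau}) is the list
   [(u^i_0, z^i_1), ..., (u^i_{tau-1}, z^i_tau)]. *)

type_synonym ('u,'z) hist = "('u \<times> 'z) list"

record ('x,'u,'z) decpomdp =
  nP :: nat
  St :: "'x set"
  Act :: "nat \<Rightarrow> 'u set"
  Obs :: "nat \<Rightarrow> 'z set"
  trans :: "'x \<Rightarrow> 'u list \<Rightarrow> 'x \<Rightarrow> 'z list \<Rightarrow> real"  (* trans M x u y z = p(y,z | x,u) *)
  rew :: "'x \<Rightarrow> 'u list \<Rightarrow> real"
  init :: "'x \<Rightarrow> real"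
  disc :: real
  horizon :: nat

definition joint_act_ok :: "('x,'u,'z) decpomdp \<Rightarrow> 'u list \<Rightarrow> bool" where
  "joint_act_ok M u \<longleftrightarrow> length u = nP M \<and> (\<forall>i<nP M. u ! i \<in> Act M i)"

definition joint_obs_ok :: "('x,'u,'z) decpomdp \<Rightarrow> 'z list \<Rightarrow> bool" where
  "joint_obs_ok M z \<longleftrightarrow> length z = nP M \<and> (\<forall>i<nP M. z ! i \<in> Obs M i)"

definition is_decpomdp :: "('x,'u,'z) decpomdp \<Rightarrow> bool" where
  "is_decpomdp M \<longleftrightarrow>
     nP M \<ge> 1 \<and> finite (St M) \<and> St M \<noteq> {} \<and>
     (\<forall>i<nP M. finite (Act M i) \<and> Act M i \<noteq> {} \<and> finite (Obs M i) \<and> Obs M i \<noteq> {}) \<and>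
     (\<forall>x u y z. trans M x u y z \<ge> 0) \<and>
     (\<forall>x u y z. trans M x u y z \<noteq> 0 \<longrightarrow> y \<in> St M \<and> joint_obs_ok M z) \<and>
     (\<forall>x\<in>St M. \<forall>u. joint_act_ok M u \<longrightarrow>
        (\<Sum>y\<in>St M. \<Sum>z\<in>{z. joint_obs_ok M z}. trans M x u y z) = 1) \<and>
     (\<forall>x. init M x \<ge> 0) \<and> (\<forall>x. init M x \<noteq> 0 \<longrightarrow> x \<in> St M) \<and>
     (\<Sum>x\<in>St M. init M x) = 1 \<and>
     0 \<le> disc M \<and> disc M \<le> 1"

(* Hierarchical information sharing: for every player i>0 (0-based),
   zeta i (z^i_t) = (u^{i-1}_{t-1}, z^{i-1}_t) almost surely. *)
definition his :: "('x,'u,'z) decpomdp \<Rightarrow> (nat \<Rightarrow> 'z \<Rightarrow> 'u \<times> 'z) \<Rightarrow> bool" where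
  "his M \<zeta> \<longleftrightarrow> (\<forall>x u y z. joint_act_ok M u \<longrightarrow> trans M x u y z \<noteq> 0 \<longrightarrow>
      (\<forall>i. 1 \<le> i \<and> i < nP M \<longrightarrow> \<zeta> i (z ! i) = (u ! (i - 1), z ! (i - 1))))"

definition dr_ok :: "('x,'u,'z) decpomdp \<Rightarrow> (nat \<Rightarrow> ('u,'z) hist \<Rightarrow> 'u) \<Rightarrow> bool" where
  "dr_ok M a \<longleftrightarrow> (\<forall>i<nP M. \<forall>h. a i h \<in> Act M i)"

definition jact :: "('x,'u,'z) decpomdp \<Rightarrow> (nat \<Rightarrow> ('u,'z) hist \<Rightarrow> 'u) \<Rightarrow> ('u,'z) hist list \<Rightarrow> 'u list" where
  "jact M a oh = map (\<lambda>i. a i (oh ! i)) [0..<nP M]"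

(* occupancy state at stage t induced by joint decision rules A 0, ..., A (t-1) *)
fun occ :: "('x,'u,'z) decpomdp \<Rightarrow> (nat \<Rightarrow> nat \<Rightarrow> ('u,'z) hist \<Rightarrow> 'u) \<Rightarrow> nat
            \<Rightarrow> 'x \<times> ('u,'z) hist list \<Rightarrow> real" where
  "occ M A 0 (x, oh) = (if oh = replicate (nP M) [] then init M x else 0)"
| "occ M A (Suc t) (y, o') =
     (if length o' = nP M \<and> (\<forall>i<nP M. o' ! i \<noteq> []) then
        (\<Sum>x\<in>St M. occ M A t (x, map butlast o') *
           (if jact M (A t) (map butlast o') = map (fst \<circ> last) o'
            then trans M x (map (fst \<circ> last) o') y (map (snd \<circ> last) o') else 0))
      else 0)"

definition reachable_occ :: "('x,'u,'z) decpomdp \<Rightarrow> nat \<Rightarrow> ('x \<times> ('u,'z) hist list \<Rightarrow> real) \<Rightarrow> bool" where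
  "reachable_occ M \<tau> s \<longleftrightarrow> (\<exists>A. (\<forall>t<\<tau>. dr_ok M (A t)) \<and> s = occ M A \<tau>)"

definition osupp :: "('x \<times> ('u,'z) hist list \<Rightarrow> real) \<Rightarrow> ('x \<times> ('u,'z) hist list) set" where
  "osupp s = {xo. s xo \<noteq> 0}"

definition Qbeta :: "('x,'u,'z) decpomdp \<Rightarrow> ('x \<times> ('u,'z) hist list \<Rightarrow> real)
     \<Rightarrow> ('x \<Rightarrow> ('u,'z) hist list \<Rightarrow> 'u list \<Rightarrow> real)
     \<Rightarrow> (nat \<Rightarrow> ('u,'z) hist \<Rightarrow> 'u) \<Rightarrow> real" where
  "Qbeta M s \<beta> a = (\<Sum>xo\<in>osupp s. s xo * \<beta> (fst xo) (snd xo) (jact M a (snd xo)))"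

(* extensive-form game. A node of player i (0-based) is (os, us) with
   os = [o^0,...,o^i] and us = [u^0,...,u^{i-1}] (s is fixed). *)

definition marg :: "('x \<times> ('u,'z) hist list \<Rightarrow> real) \<Rightarrow> nat \<Rightarrow> ('u,'z) hist list \<Rightarrow> real" where
  "marg s k os = (\<Sum>xo\<in>{xo\<in>osupp s. take k (snd xo) = os}. s xo)"

definition hists :: "('x \<times> ('u,'z) hist list \<Rightarrow> real) \<Rightarrow> nat \<Rightarrow> ('u,'z) hist set" where
  "hists s i = (\<lambda>xo. snd xo ! i) ` osupp s"

(* T(node of next player with history o' | node with histories os) *)
definition trP :: "('x \<times> ('u,'z) hist list \<Rightarrow> real) \<Rightarrow> ('u,'z) hist list \<Rightarrow> ('u,'z) hist \<Rightarrow> real" where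
  "trP s os o' = marg s (Suc (length os)) (os @ [o']) / marg s (length os) os"

(* terminal payoff R at a node of the last player *)
definition payR :: "('x \<times> ('u,'z) hist list \<Rightarrow> real) \<Rightarrow> ('x \<Rightarrow> ('u,'z) hist list \<Rightarrow> 'u list \<Rightarrow> real)
     \<Rightarrow> ('u,'z) hist list \<times> 'u list \<Rightarrow> 'u \<Rightarrow> real" where
  "payR s \<beta> nd u = (\<Sum>x\<in>fst ` osupp s. (s (x, fst nd) / marg s (length (fst nd)) (fst nd)) *
                        \<beta> x (fst nd) (snd nd @ [u]))"

(* beta^{*} with d = number of remaining players after the current one *)
fun bst :: "('x,'u,'z) decpomdp \<Rightarrow> ('x \<times> ('u,'z) hist list \<Rightarrow> real) \<Rightarrow> ('x \<Rightarrow> ('u,'z) hist list \<Rightarrow> 'u list \<Rightarrow> real)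
     \<Rightarrow> nat \<Rightarrow> ('u,'z) hist list \<times> 'u list \<Rightarrow> 'u \<Rightarrow> real" where
  "bst M s \<beta> 0 nd u = payR s \<beta> nd u"
| "bst M s \<beta> (Suc d) (os, us) u =
     (\<Sum>o'\<in>hists s (length os). trP s os o' *
        Max ((bst M s \<beta> d (os @ [o'], us @ [u])) ` Act M (length os)))"

definition betastar :: "('x,'u,'z) decpomdp \<Rightarrow> ('x \<times> ('u,'z) hist list \<Rightarrow> real) \<Rightarrow> ('x \<Rightarrow> ('u,'z) hist list \<Rightarrow> 'u list \<Rightarrow> real)
     \<Rightarrow> nat \<Rightarrow> ('u,'z) hist list \<times> 'u list \<Rightarrow> 'u \<Rightarrow> real" where
  "betastar M s \<beta> i nd u = bst M s \<beta> (nP M - 1 - i) nd u"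

definition strat_ok :: "('x,'u,'z) decpomdp \<Rightarrow> (nat \<Rightarrow> ('u,'z) hist list \<times> 'u list \<Rightarrow> 'u) \<Rightarrow> bool" where
  "strat_ok M \<sigma> \<longleftrightarrow> (\<forall>i<nP M. \<forall>nd. \<sigma> i nd \<in> Act M i)"

(* expected payoff under sigma after playing u at node nd, d players remaining *)
fun spay :: "('x,'u,'z) decpomdp \<Rightarrow> ('x \<times> ('u,'z) hist list \<Rightarrow> real) \<Rightarrow> ('x \<Rightarrow> ('u,'z) hist list \<Rightarrow> 'u list \<Rightarrow> real)
     \<Rightarrow> (nat \<Rightarrow> ('u,'z) hist list \<times> 'u list \<Rightarrow> 'u) \<Rightarrow> nat \<Rightarrow> ('u,'z) hist list \<times> 'u list \<Rightarrow> 'u \<Rightarrow> real" where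
  "spay M s \<beta> \<sigma> 0 nd u = payR s \<beta> nd u"
| "spay M s \<beta> \<sigma> (Suc d) (os, us) u =
     (\<Sum>o'\<in>hists s (length os). trP s os o' *
        spay M s \<beta> \<sigma> d (os @ [o'], us @ [u]) (\<sigma> (length os) (os @ [o'], us @ [u])))"

definition payoff_after :: "('x,'u,'z) decpomdp \<Rightarrow> ('x \<times> ('u,'z) hist list \<Rightarrow> real) \<Rightarrow> ('x \<Rightarrow> ('u,'z) hist list \<Rightarrow> 'u list \<Rightarrow> real)
     \<Rightarrow> (nat \<Rightarrow> ('u,'z) hist list \<times> 'u list \<Rightarrow> 'u) \<Rightarrow> nat \<Rightarrow> ('u,'z) hist list \<times> 'u list \<Rightarrow> 'u \<Rightarrow> real" where
  "payoff_after M s \<beta> \<sigma> i nd u = spay M s \<beta> \<sigma> (nP M - 1 - i) nd u"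

definition game_val :: "('x,'u,'z) decpomdp \<Rightarrow> ('x \<times> ('u,'z) hist list \<Rightarrow> real) \<Rightarrow> ('x \<Rightarrow> ('u,'z) hist list \<Rightarrow> 'u list \<Rightarrow> real)
     \<Rightarrow> (nat \<Rightarrow> ('u,'z) hist list \<times> 'u list \<Rightarrow> 'u) \<Rightarrow> real" where
  "game_val M s \<beta> \<sigma> = (\<Sum>o1\<in>hists s 0. marg s 1 [o1] * payoff_after M s \<beta> \<sigma> 0 ([o1], []) (\<sigma> 0 ([o1], [])))"

definition node_ok :: "('x,'u,'z) decpomdp \<Rightarrow> ('x \<times> ('u,'z) hist list \<Rightarrow> real) \<Rightarrow> nat \<Rightarrow> ('u,'z) hist list \<times> 'u list \<Rightarrow> bool" where
  "node_ok M s i nd \<longleftrightarrow> length (fst nd) = Suc i \<and> length (snd nd) = i \<and>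
      (\<forall>j<i. snd nd ! j \<in> Act M j) \<and> marg s (Suc i) (fst nd) > 0"

(* Recovering o^{0:i} from o^i via the HIS maps zeta *)
definition down :: "(nat \<Rightarrow> 'z \<Rightarrow> 'u \<times> 'z) \<Rightarrow> nat \<Rightarrow> ('u,'z) hist \<Rightarrow> ('u,'z) hist" where
  "down \<zeta> i h = map (\<lambda>p. \<zeta> i (snd p)) h"

fun lowhists :: "(nat \<Rightarrow> 'z \<Rightarrow> 'u \<times> 'z) \<Rightarrow> nat \<Rightarrow> ('u,'z) hist \<Rightarrow> ('u,'z) hist list" where
  "lowhists \<zeta> 0 h = [h]"
| "lowhists \<zeta> (Suc i) h = lowhists \<zeta> i (down \<zeta> (Suc i) h) @ [h]"

(* actions [a^0(o^0), ..., a^i(o^i)] of the decision rules induced by sigma *)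
fun sacts :: "(nat \<Rightarrow> 'z \<Rightarrow> 'u \<times> 'z) \<Rightarrow> (nat \<Rightarrow> ('u,'z) hist list \<times> 'u list \<Rightarrow> 'u) \<Rightarrow> nat
     \<Rightarrow> ('u,'z) hist \<Rightarrow> 'u list" where
  "sacts \<zeta> \<sigma> 0 h = [\<sigma> 0 ([h], [])]"
| "sacts \<zeta> \<sigma> (Suc i) h =
     (let prev = sacts \<zeta> \<sigma> i (down \<zeta> (Suc i) h)
      in prev @ [\<sigma> (Suc i) (lowhists \<zeta> (Suc i) h, prev)])"

(* a^i(o^i) = sigma(<s, o^{0:i}, a^{0:i-1}(o^{0:i-1})>) *)
definition rule_of :: "(nat \<Rightarrow> 'z \<Rightarrow> 'u \<times> 'z) \<Rightarrow> (nat \<Rightarrow> ('u,'z) hist list \<times> 'u list \<Rightarrow> 'u)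
     \<Rightarrow> nat \<Rightarrow> ('u,'z) hist \<Rightarrow> 'u" where
  "rule_of \<zeta> \<sigma> i h = last (sacts \<zeta> \<sigma> i h)"

definition is_greedy :: "('x,'u,'z) decpomdp \<Rightarrow> ('x \<times> ('u,'z) hist list \<Rightarrow> real)
     \<Rightarrow> ('x \<Rightarrow> ('u,'z) hist list \<Rightarrow> 'u list \<Rightarrow> real) \<Rightarrow> (nat \<Rightarrow> 'z \<Rightarrow> 'u \<times> 'z)
     \<Rightarrow> (nat \<Rightarrow> ('u,'z) hist \<Rightarrow> 'u) \<Rightarrow> bool" where
  "is_greedy M s \<beta> \<zeta> a \<longleftrightarrow> (\<forall>i<nP M. \<forall>h.
      (let nd = (lowhists \<zeta> i h, map (\<lambda>j. a j (lowhists \<zeta> i h ! j)) [0..<i]) in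
       a i h \<in> Act M i \<and>
       betastar M s \<beta> i nd (a i h) = Max (betastar M s \<beta> i nd ` Act M i)))"

end

theory Submission
  imports Defs
begin

(* Under hierarchical information sharing the private history of player i determines the private
   histories of all players below it.  So on the support of a reachable occupancy state a decision
   rule of player i can rebuild the node of the extensive-form game at which it acts, including the
   actions chosen there by the players below it.  Consequently every strategy sigma of the planner
   induces a joint decision rule (rule_of) whose value Q_beta is the game value of sigma, and every
   joint decision rule is induced by some strategy: that of acting on the last private history of
   the node.  Both games thus have the same optimal value.  In the perfect-information game it is
   computed by backward induction, which is the recursion defining beta^{i,*}; a greedy joint
   decision rule induces a strategy that is greedy at all nodes consistent with its own earlier
   moves, and this suffices to attain it. *)

section \<open>Occupancy states under hierarchical information sharing\<close>

lemma occ_nonneg: "is_decpomdp M \<Longrightarrow> 0 \<le> occ M A t xo"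
proof (induction t arbitrary: xo)
  case 0
  then show ?case by (cases xo) (auto simp: is_decpomdp_def)
next
  case (Suc t)
  have "0 \<le> decpomdp.trans M x u y z" for x u y z
    using Suc.prems by (auto simp: is_decpomdp_def)
  then show ?case
    using Suc.IH[OF Suc.prems] by (cases xo) (auto intro!: sum_nonneg)
qed

lemma occ_Suc_neq_0D:
  assumes "occ M A (Suc t) (y, oh) \<noteq> 0"
  shows "length oh = nP M" "\<forall>i<nP M. oh ! i \<noteq> []"
    and "\<exists>x. occ M A t (x, map butlast oh) \<noteq> 0
            \<and> jact M (A t) (map butlast oh) = map (fst \<circ> last) oh
            \<and> decpomdp.trans M x (map (fst \<circ> last) oh) y (map (snd \<circ> last) oh) \<noteq> 0"
proof -
  show len: "length oh = nP M" and ne: "\<forall>i<nP M. oh ! i \<noteq> []"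
    using assms by (auto split: if_splits)
  with assms have "(\<Sum>x\<in>St M. occ M A t (x, map butlast oh) *
      (if jact M (A t) (map butlast oh) = map (fst \<circ> last) oh
       then decpomdp.trans M x (map (fst \<circ> last) oh) y (map (snd \<circ> last) oh) else 0)) \<noteq> 0"
    by simp
  then obtain x where "occ M A t (x, map butlast oh) *
      (if jact M (A t) (map butlast oh) = map (fst \<circ> last) oh
       then decpomdp.trans M x (map (fst \<circ> last) oh) y (map (snd \<circ> last) oh) else 0) \<noteq> 0"
    by (rule sum.not_neutral_contains_not_neutral)
  then show "\<exists>x. occ M A t (x, map butlast oh) \<noteq> 0
      \<and> jact M (A t) (map butlast oh) = map (fst \<circ> last) oh
      \<and> decpomdp.trans M x (map (fst \<circ> last) oh) y (map (snd \<circ> last) oh) \<noteq> 0"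
    by (auto split: if_splits)
qed

lemma down_snoc: "down \<zeta> j (h @ [p]) = down \<zeta> j h @ [\<zeta> j (snd p)]"
  by (simp add: down_def)

lemma occ_support_nested:
  assumes "his M \<zeta>" "\<forall>t'<t. dr_ok M (A t')" "occ M A t (y, oh) \<noteq> 0"
  shows "length oh = nP M \<and> (\<forall>j. 1 \<le> j \<and> j < nP M \<longrightarrow> down \<zeta> j (oh ! j) = oh ! (j - 1))"
  using assms(2,3)
proof (induction t arbitrary: y oh)
  case 0
  then show ?case by (auto simp: down_def split: if_splits)
next
  case (Suc t)
  note len = occ_Suc_neq_0D(1)[OF Suc.prems(2)] and ne = occ_Suc_neq_0D(2)[OF Suc.prems(2)]
  obtain x where x: "occ M A t (x, map butlast oh) \<noteq> 0"
    and acts: "jact M (A t) (map butlast oh) = map (fst \<circ> last) oh"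
    and trans: "decpomdp.trans M x (map (fst \<circ> last) oh) y (map (snd \<circ> last) oh) \<noteq> 0"
    using occ_Suc_neq_0D(3)[OF Suc.prems(2)] by blast
  have IH: "down \<zeta> j (butlast (oh ! j)) = butlast (oh ! (j - 1))" if "1 \<le> j" "j < nP M" for j
    using Suc.IH[OF _ x] Suc.prems(1) len that by auto
  have "joint_act_ok M (map (fst \<circ> last) oh)"
    using Suc.prems(1) len unfolding acts[symmetric]
    by (auto simp: joint_act_ok_def jact_def dr_ok_def)
  then have "\<zeta> j (map (snd \<circ> last) oh ! j)
      = (map (fst \<circ> last) oh ! (j - 1), map (snd \<circ> last) oh ! (j - 1))" if "1 \<le> j" "j < nP M" for j
    using assms(1) trans that unfolding his_def by blast
  then have \<zeta>_last: "\<zeta> j (snd (last (oh ! j))) = last (oh ! (j - 1))" if "1 \<le> j" "j < nP M" for j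
    using that len by auto
  have "down \<zeta> j (oh ! j) = oh ! (j - 1)" if "1 \<le> j" "j < nP M" for j
  proof -
    have "down \<zeta> j (oh ! j) = down \<zeta> j (butlast (oh ! j) @ [last (oh ! j)])"
      using ne that by simp
    also have "\<dots> = butlast (oh ! (j - 1)) @ [last (oh ! (j - 1))]"
      using IH \<zeta>_last that by (simp add: down_snoc)
    also have "\<dots> = oh ! (j - 1)"
      using ne that by simp
    finally show ?thesis .
  qed
  with len show ?case by blast
qed

lemma finite_joint_obs: "is_decpomdp M \<Longrightarrow> finite {z. joint_obs_ok M z}"
proof -
  assume M: "is_decpomdp M"
  have "{z. joint_obs_ok M z} \<subseteq> {zs. set zs \<subseteq> (\<Union>i<nP M. Obs M i) \<and> length zs = nP M}"
    by (fastforce simp: joint_obs_ok_def in_set_conv_nth)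
  moreover have "finite (\<Union>i<nP M. Obs M i)"
    using M by (auto simp: is_decpomdp_def)
  ultimately show ?thesis
    by (rule finite_subset[OF _ finite_lists_length_eq])
qed

lemma finite_osupp_occ:
  assumes M: "is_decpomdp M"
  shows "finite (osupp (occ M A t))"
proof (induction t)
  case 0
  have "osupp (occ M A 0) \<subseteq> St M \<times> {replicate (nP M) []}"
    using M by (auto simp: osupp_def is_decpomdp_def split: if_splits)
  moreover have "finite (St M)"
    using M by (simp add: is_decpomdp_def)
  ultimately show ?case
    by (simp add: finite_subset)
next
  case (Suc t)
  define extend where
    "extend = (\<lambda>(oh, z). map (\<lambda>i. oh ! i @ [(jact M (A t) oh ! i, z ! i)]) [0..<nP M])"
  have "osupp (occ M A (Suc t)) \<subseteq>
      St M \<times> extend ` (snd ` osupp (occ M A t) \<times> {z. joint_obs_ok M z})"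
  proof
    fix yo assume "yo \<in> osupp (occ M A (Suc t))"
    moreover obtain y oh where yo: "yo = (y, oh)"
      by (cases yo)
    ultimately have nz: "occ M A (Suc t) (y, oh) \<noteq> 0"
      by (simp add: osupp_def)
    note len = occ_Suc_neq_0D(1)[OF nz] and ne = occ_Suc_neq_0D(2)[OF nz]
    obtain x where x: "occ M A t (x, map butlast oh) \<noteq> 0"
      and acts: "jact M (A t) (map butlast oh) = map (fst \<circ> last) oh"
      and trans: "decpomdp.trans M x (map (fst \<circ> last) oh) y (map (snd \<circ> last) oh) \<noteq> 0"
      using occ_Suc_neq_0D(3)[OF nz] by blast
    have "y \<in> St M" and "joint_obs_ok M (map (snd \<circ> last) oh)"
      using trans M by (auto simp: is_decpomdp_def)
    moreover have "map butlast oh \<in> snd ` osupp (occ M A t)"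
      using x by (force simp: osupp_def)
    moreover have "oh = extend (map butlast oh, map (snd \<circ> last) oh)"
    proof (rule nth_equalityI)
      fix i assume "i < length oh"
      moreover have "jact M (A t) (map butlast oh) ! i = fst (last (oh ! i))"
        using acts len \<open>i < length oh\<close> by simp
      ultimately show "oh ! i = extend (map butlast oh, map (snd \<circ> last) oh) ! i"
        using ne len by (simp add: extend_def)
    qed (simp add: extend_def len)
    ultimately show "yo \<in> St M \<times> extend ` (snd ` osupp (occ M A t) \<times> {z. joint_obs_ok M z})"
      using yo by blast
  qed
  moreover have "finite (St M)"
    using M by (simp add: is_decpomdp_def)
  ultimately show ?case
    using Suc finite_joint_obs[OF M] by (meson finite_SigmaI finite_imageI finite_subset)
qed

locale his_occupancy =
  fixes M :: "('x,'u,'z) decpomdp"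
    and s :: "'x \<times> ('u,'z) hist list \<Rightarrow> real"
    and \<zeta> :: "nat \<Rightarrow> 'z \<Rightarrow> 'u \<times> 'z"
    and \<beta> :: "'x \<Rightarrow> ('u,'z) hist list \<Rightarrow> 'u list \<Rightarrow> real"
  assumes decpomdp: "is_decpomdp M"
    and finite_osupp: "finite (osupp s)"
    and nonneg: "0 \<le> s xo"
    and length_osupp: "xo \<in> osupp s \<Longrightarrow> length (snd xo) = nP M"
    and down_osupp:
      "xo \<in> osupp s \<Longrightarrow> 1 \<le> j \<Longrightarrow> j < nP M \<Longrightarrow> down \<zeta> j (snd xo ! j) = snd xo ! (j - 1)"

lemma his_occupancy_reachable:
  assumes "is_decpomdp M" "his M \<zeta>" "reachable_occ M \<tau> s"
  shows "his_occupancy M s \<zeta>"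
proof -
  from assms(3) obtain A where A: "\<forall>t<\<tau>. dr_ok M (A t)" and s: "s = occ M A \<tau>"
    unfolding reachable_occ_def by blast
  have nested: "length (snd xo) = nP M \<and>
      (\<forall>j. 1 \<le> j \<and> j < nP M \<longrightarrow> down \<zeta> j (snd xo ! j) = snd xo ! (j - 1))"
    if "xo \<in> osupp s" for xo
    using that occ_support_nested[OF assms(2) A, of "fst xo" "snd xo"] by (simp add: s osupp_def)
  show ?thesis
    using assms(1) nested occ_nonneg finite_osupp_occ by unfold_locales (simp_all add: s)
qed

context his_occupancy
begin

lemma nP_pos: "0 < nP M"
  using decpomdp by (simp add: is_decpomdp_def)

lemma finite_Act: "i < nP M \<Longrightarrow> finite (Act M i)"
  using decpomdp by (simp add: is_decpomdp_def)

lemma Act_nonempty: "i < nP M \<Longrightarrow> Act M i \<noteq> {}"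
  using decpomdp by (simp add: is_decpomdp_def)

definition cell :: "('u,'z) hist list \<Rightarrow> ('x \<times> ('u,'z) hist list) set" where
  "cell os = {xo \<in> osupp s. take (length os) (snd xo) = os}"

lemma marg_eq_sum_cell: "marg s (length os) os = sum s (cell os)"
  by (simp add: marg_def cell_def)

lemma marg_nonneg: "0 \<le> marg s k os"
  unfolding marg_def by (rule sum_nonneg) (rule nonneg)

lemma trP_nonneg: "0 \<le> trP s os o'"
  unfolding trP_def using marg_nonneg by simp

lemma marg_eq_0_iff: "marg s (length os) os = 0 \<longleftrightarrow> cell os = {}"
proof -
  have "marg s (length os) os = 0 \<longleftrightarrow> (\<forall>xo\<in>cell os. s xo = 0)"
    unfolding marg_eq_sum_cell using finite_osupp nonneg
    by (intro sum_nonneg_eq_0_iff) (auto simp: cell_def)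
  also have "\<dots> \<longleftrightarrow> cell os = {}"
    by (auto simp: cell_def osupp_def)
  finally show ?thesis .
qed

lemma cell_Nil: "cell [] = osupp s"
  by (simp add: cell_def)

lemma cell_snoc: "length os < nP M \<Longrightarrow> cell (os @ [o']) = {xo \<in> cell os. snd xo ! length os = o'}"
  using length_osupp by (auto simp: cell_def take_Suc_conv_app_nth)

lemma sum_cell_split:
  assumes "length os < nP M"
  shows "sum f (cell os) = (\<Sum>o'\<in>hists s (length os). sum f (cell (os @ [o'])))"
  unfolding cell_snoc[OF assms]
  by (rule sum.group[symmetric]) (auto simp: cell_def hists_def finite_osupp)

lemma lowhists_osupp:
  "xo \<in> osupp s \<Longrightarrow> i < nP M \<Longrightarrow> lowhists \<zeta> i (snd xo ! i) = take (Suc i) (snd xo)"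
proof (induction i)
  case 0
  then have "snd xo \<noteq> []"
    using length_osupp nP_pos by fastforce
  then show ?case
    by (cases "snd xo") auto
next
  case (Suc i)
  then show ?case
    using down_osupp[of xo "Suc i"] length_osupp[of xo] by (simp add: take_Suc_conv_app_nth)
qed

lemma lowhists_if_marg_neq_0:
  assumes "length os < nP M" "marg s (Suc (length os)) (os @ [o']) \<noteq> 0"
  shows "lowhists \<zeta> (length os) o' = os @ [o']"
proof -
  obtain xo where "xo \<in> cell (os @ [o'])"
    using assms(2) marg_eq_0_iff[of "os @ [o']"] by auto
  then have xo: "xo \<in> osupp s" and take: "take (Suc (length os)) (snd xo) = os @ [o']"
    by (auto simp: cell_def)
  then have "snd xo ! length os = o'"
    by (metis lessI nth_append_length nth_take)
  then show ?thesis
    using lowhists_osupp[OF xo assms(1)] take by simp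
qed

section \<open>Backward induction in the extensive-form game\<close>

lemma spay_le_bst:
  assumes \<sigma>: "strat_ok M \<sigma>"
  shows "length os + d = nP M \<Longrightarrow> spay M s \<beta> \<sigma> d (os, us) u \<le> bst M s \<beta> d (os, us) u"
proof (induction d arbitrary: os us u)
  case 0
  then show ?case by simp
next
  case (Suc d)
  let ?k = "length os"
  show ?case unfolding spay.simps bst.simps
  proof (intro sum_mono mult_left_mono[OF _ trP_nonneg])
    fix o'
    let ?nd = "(os @ [o'], us @ [u])"
    have "spay M s \<beta> \<sigma> d ?nd (\<sigma> ?k ?nd) \<le> bst M s \<beta> d ?nd (\<sigma> ?k ?nd)"
      using Suc by simp
    also have "\<dots> \<le> Max (bst M s \<beta> d ?nd ` Act M ?k)"
      using \<sigma> Suc.prems finite_Act[of ?k] by (auto simp: strat_ok_def)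
    finally show "spay M s \<beta> \<sigma> d ?nd (\<sigma> ?k ?nd) \<le> Max (bst M s \<beta> d ?nd ` Act M ?k)" .
  qed
qed

definition greedy_at ::
    "(nat \<Rightarrow> ('u,'z) hist list \<times> 'u list \<Rightarrow> 'u) \<Rightarrow> nat \<Rightarrow> ('u,'z) hist list \<times> 'u list \<Rightarrow> bool"
  where "greedy_at \<sigma> i nd \<longleftrightarrow>
    betastar M s \<beta> i nd (\<sigma> i nd) = Max (betastar M s \<beta> i nd ` Act M i)"

(* P is an invariant of the play of sigma; greediness is only required at nodes of positive
   probability reached from nodes satisfying P. *)
definition greedy_along ::
    "(nat \<Rightarrow> ('u,'z) hist list \<times> 'u list \<Rightarrow> 'u) \<Rightarrow> (('u,'z) hist list \<Rightarrow> 'u list \<Rightarrow> 'u \<Rightarrow> bool) \<Rightarrow> bool"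
  where "greedy_along \<sigma> P \<longleftrightarrow>
    (\<forall>os us u o'. P os us u \<and> length os < nP M \<and> marg s (Suc (length os)) (os @ [o']) \<noteq> 0 \<longrightarrow>
       greedy_at \<sigma> (length os) (os @ [o'], us @ [u]) \<and>
       P (os @ [o']) (us @ [u]) (\<sigma> (length os) (os @ [o'], us @ [u])))"

lemma spay_eq_bst_if_greedy_along:
  assumes "greedy_along \<sigma> P"
  shows "length os + d = nP M \<Longrightarrow> P os us u \<Longrightarrow>
    spay M s \<beta> \<sigma> d (os, us) u = bst M s \<beta> d (os, us) u"
proof (induction d arbitrary: os us u)
  case 0
  then show ?case by simp
next
  case (Suc d)
  let ?k = "length os"
  show ?case unfolding spay.simps bst.simps
  proof (rule sum.cong[OF refl])
    fix o'
    let ?nd = "(os @ [o'], us @ [u])"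
    show "trP s os o' * spay M s \<beta> \<sigma> d ?nd (\<sigma> ?k ?nd) =
        trP s os o' * Max (bst M s \<beta> d ?nd ` Act M ?k)"
    proof (cases "marg s (Suc ?k) (os @ [o']) = 0")
      case True
      then show ?thesis by (simp add: trP_def)
    next
      case False
      with assms Suc.prems have "greedy_at \<sigma> ?k ?nd" and "P (os @ [o']) (us @ [u]) (\<sigma> ?k ?nd)"
        by (auto simp: greedy_along_def)
      moreover have "nP M - 1 - ?k = d"
        using Suc.prems by simp
      ultimately show ?thesis
        using Suc by (simp add: greedy_at_def betastar_def)
    qed
  qed
qed

lemma ex_greedy_strategy: "\<exists>\<sigma>. strat_ok M \<sigma> \<and> (\<forall>i<nP M. \<forall>nd. greedy_at \<sigma> i nd)"
proof -
  have "\<exists>u. i < nP M \<longrightarrow> u \<in> Act M i \<and> betastar M s \<beta> i nd u = Max (betastar M s \<beta> i nd ` Act M i)"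
    for i nd
  proof (cases "i < nP M")
    case True
    then have "Max (betastar M s \<beta> i nd ` Act M i) \<in> betastar M s \<beta> i nd ` Act M i"
      using finite_Act Act_nonempty by simp
    then show ?thesis
      by force
  qed simp
  then obtain \<sigma> where "\<forall>i nd. i < nP M \<longrightarrow> \<sigma> i nd \<in> Act M i \<and>
      betastar M s \<beta> i nd (\<sigma> i nd) = Max (betastar M s \<beta> i nd ` Act M i)"
    by metis
  then show ?thesis
    by (auto simp: strat_ok_def greedy_at_def)
qed

definition opt_val :: real where
  "opt_val = (\<Sum>o1\<in>hists s 0. marg s 1 [o1] * Max (betastar M s \<beta> 0 ([o1], []) ` Act M 0))"

lemma game_val_le_opt_val:
  assumes \<sigma>: "strat_ok M \<sigma>"
  shows "game_val M s \<beta> \<sigma> \<le> opt_val"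
  unfolding game_val_def opt_val_def
proof (intro sum_mono mult_left_mono[OF _ marg_nonneg])
  fix o1
  let ?nd = "([o1], []) :: ('u,'z) hist list \<times> 'u list"
  have "payoff_after M s \<beta> \<sigma> 0 ?nd (\<sigma> 0 ?nd) \<le> betastar M s \<beta> 0 ?nd (\<sigma> 0 ?nd)"
    unfolding payoff_after_def betastar_def using spay_le_bst[OF \<sigma>] nP_pos by simp
  also have "\<dots> \<le> Max (betastar M s \<beta> 0 ?nd ` Act M 0)"
    using \<sigma> nP_pos finite_Act[of 0] by (auto simp: strat_ok_def)
  finally show "payoff_after M s \<beta> \<sigma> 0 ?nd (\<sigma> 0 ?nd) \<le> Max (betastar M s \<beta> 0 ?nd ` Act M 0)" .
qed

lemma game_val_eq_opt_val_if_greedy_along: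
  assumes root: "\<And>o1. marg s 1 [o1] \<noteq> 0 \<Longrightarrow> greedy_at \<sigma> 0 ([o1], []) \<and> P [o1] [] (\<sigma> 0 ([o1], []))"
    and along: "greedy_along \<sigma> P"
  shows "game_val M s \<beta> \<sigma> = opt_val"
  unfolding game_val_def opt_val_def
proof (rule sum.cong[OF refl])
  fix o1
  show "marg s 1 [o1] * payoff_after M s \<beta> \<sigma> 0 ([o1], []) (\<sigma> 0 ([o1], []))
      = marg s 1 [o1] * Max (betastar M s \<beta> 0 ([o1], []) ` Act M 0)"
  proof (cases "marg s 1 [o1] = 0")
    case False
    with root have "greedy_at \<sigma> 0 ([o1], [])" and "P [o1] [] (\<sigma> 0 ([o1], []))"
      by auto
    with spay_eq_bst_if_greedy_along[OF along] nP_pos show ?thesis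
      by (simp add: payoff_after_def greedy_at_def betastar_def)
  qed simp
qed

lemma payoff_after_le_betastar:
  "strat_ok M \<sigma> \<Longrightarrow> i < nP M \<Longrightarrow> length (fst nd) = Suc i \<Longrightarrow>
    payoff_after M s \<beta> \<sigma> i nd u \<le> betastar M s \<beta> i nd u"
  using spay_le_bst[of \<sigma> "fst nd" "nP M - 1 - i" "snd nd" u]
  by (simp add: payoff_after_def betastar_def)

lemma greedy_along_True: "\<forall>i<nP M. \<forall>nd. greedy_at \<sigma> i nd \<Longrightarrow> greedy_along \<sigma> (\<lambda>_ _ _. True)"
  by (simp add: greedy_along_def)

lemma payoff_after_greedy:
  "\<forall>i<nP M. \<forall>nd. greedy_at \<sigma> i nd \<Longrightarrow> i < nP M \<Longrightarrow> length (fst nd) = Suc i \<Longrightarrow>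
    payoff_after M s \<beta> \<sigma> i nd u = betastar M s \<beta> i nd u"
  using spay_eq_bst_if_greedy_along[OF greedy_along_True, of \<sigma> "fst nd" "nP M - 1 - i" "snd nd" u]
  by (simp add: payoff_after_def betastar_def)

lemma game_val_greedy: "\<forall>i<nP M. \<forall>nd. greedy_at \<sigma> i nd \<Longrightarrow> game_val M s \<beta> \<sigma> = opt_val"
  using nP_pos by (intro game_val_eq_opt_val_if_greedy_along[OF _ greedy_along_True]) auto

end

section \<open>Strategies of the planner and joint decision rules\<close>

(* extend_play sigma oh d us: the action profile us followed by the moves of sigma at the next d
   nodes along the joint history oh. *)
fun extend_play ::
    "(nat \<Rightarrow> ('u,'z) hist list \<times> 'u list \<Rightarrow> 'u) \<Rightarrow> ('u,'z) hist list \<Rightarrow> nat \<Rightarrow> 'u list \<Rightarrow> 'u list"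
  where
    "extend_play \<sigma> oh 0 us = us"
  | "extend_play \<sigma> oh (Suc d) us =
      extend_play \<sigma> oh d (us @ [\<sigma> (length us) (take (Suc (length us)) oh, us)])"

lemma length_extend_play [simp]: "length (extend_play \<sigma> oh d us) = length us + d"
  by (induction d arbitrary: us) auto

lemma extend_play_Suc_right:
  "extend_play \<sigma> oh (Suc d) us =
     extend_play \<sigma> oh d us @
       [\<sigma> (length us + d) (take (Suc (length us + d)) oh, extend_play \<sigma> oh d us)]"
proof (induction d arbitrary: us)
  case (Suc d)
  let ?us' = "us @ [\<sigma> (length us) (take (Suc (length us)) oh, us)]"
  have "extend_play \<sigma> oh (Suc (Suc d)) us = extend_play \<sigma> oh (Suc d) ?us'"
    by (rule extend_play.simps(2))
  also have "\<dots> = extend_play \<sigma> oh d ?us' @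
      [\<sigma> (length ?us' + d) (take (Suc (length ?us' + d)) oh, extend_play \<sigma> oh d ?us')]"
    by (rule Suc.IH)
  finally show ?case
    by simp
qed simp

lemma extend_play_Nil_eq_map_last:
  "extend_play \<sigma> oh k [] = map (\<lambda>i. last (extend_play \<sigma> oh (Suc i) [])) [0..<k]"
proof (induction k)
  case (Suc k)
  then show ?case
    by (simp del: extend_play.simps(2) add: extend_play_Suc_right)
qed simp

lemma last_sacts: "last (sacts \<zeta> \<sigma> i h) = \<sigma> i (lowhists \<zeta> i h, butlast (sacts \<zeta> \<sigma> i h))"
  by (cases i) (auto simp: Let_def)

lemma last_lowhists [simp]: "last (lowhists \<zeta> i h) = h"
  by (cases i) auto

definition rule_strategy ::
    "(nat \<Rightarrow> ('u,'z) hist \<Rightarrow> 'u) \<Rightarrow> nat \<Rightarrow> ('u,'z) hist list \<times> 'u list \<Rightarrow> 'u"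
  where "rule_strategy a i nd = a i (last (fst nd))"

lemma rule_of_rule_strategy: "rule_of \<zeta> (rule_strategy a) = a"
  by (intro ext) (simp add: rule_of_def last_sacts rule_strategy_def)

lemma strat_ok_rule_strategy: "dr_ok M a \<Longrightarrow> strat_ok M (rule_strategy a)"
  by (simp add: strat_ok_def dr_ok_def rule_strategy_def)

lemma dr_ok_rule_of: "strat_ok M \<sigma> \<Longrightarrow> dr_ok M (rule_of \<zeta> \<sigma>)"
  by (simp add: rule_of_def last_sacts strat_ok_def dr_ok_def)

lemma dr_ok_if_is_greedy: "is_greedy M s \<beta> \<zeta> a \<Longrightarrow> dr_ok M a"
  by (auto simp: is_greedy_def dr_ok_def Let_def)

context his_occupancy
begin

lemma marg_mult_spay:
  "length os + d = nP M \<Longrightarrow> length us + 1 = length os \<Longrightarrow>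
   marg s (length os) os * spay M s \<beta> \<sigma> d (os, us) u =
   (\<Sum>xo\<in>cell os. s xo * \<beta> (fst xo) (snd xo) (extend_play \<sigma> (snd xo) d (us @ [u])))"
proof (induction d arbitrary: os us u)
  case 0
  let ?g = "\<lambda>xo. s xo * \<beta> (fst xo) (snd xo) (us @ [u])"
  show ?case
  proof (cases "cell os = {}")
    case False
    then have "marg s (length os) os \<noteq> 0"
      by (simp add: marg_eq_0_iff)
    then have "marg s (length os) os * spay M s \<beta> \<sigma> 0 (os, us) u = (\<Sum>x\<in>fst ` osupp s. ?g (x, os))"
      by (simp add: payR_def sum_distrib_left)
    also have "\<dots> = (\<Sum>x\<in>fst ` cell os. ?g (x, os))"
    proof (rule sum.mono_neutral_right)
      show "\<forall>x\<in>fst ` osupp s - fst ` cell os. ?g (x, os) = 0"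
        by (force simp: cell_def osupp_def)
    qed (auto simp: finite_osupp cell_def)
    also have "\<dots> = sum ?g (cell os)"
      using length_osupp "0.prems"(1)
      by (subst sum.reindex) (auto simp: inj_on_def cell_def intro!: sum.cong)
    finally show ?thesis by simp
  qed (simp add: marg_eq_0_iff)
next
  case (Suc d)
  let ?k = "length os"
  let ?g = "\<lambda>xo. s xo * \<beta> (fst xo) (snd xo) (extend_play \<sigma> (snd xo) (Suc d) (us @ [u]))"
  show ?case
  proof (cases "cell os = {}")
    case False
    then have "marg s ?k os \<noteq> 0"
      by (simp add: marg_eq_0_iff)
    then have "marg s ?k os * spay M s \<beta> \<sigma> (Suc d) (os, us) u =
      (\<Sum>o'\<in>hists s ?k. marg s (length (os @ [o'])) (os @ [o']) *
          spay M s \<beta> \<sigma> d (os @ [o'], us @ [u]) (\<sigma> ?k (os @ [o'], us @ [u])))"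
      by (simp add: sum_distrib_left trP_def)
    also have "\<dots> = (\<Sum>o'\<in>hists s ?k. sum ?g (cell (os @ [o'])))"
    proof (rule sum.cong[OF refl])
      fix o'
      let ?nd = "(os @ [o'], us @ [u])"
      have "marg s (length (os @ [o'])) (os @ [o']) * spay M s \<beta> \<sigma> d ?nd (\<sigma> ?k ?nd) =
          (\<Sum>xo\<in>cell (os @ [o']).
             s xo * \<beta> (fst xo) (snd xo) (extend_play \<sigma> (snd xo) d ((us @ [u]) @ [\<sigma> ?k ?nd])))"
        using Suc.IH[of "os @ [o']" "us @ [u]"] Suc.prems by simp
      also have "\<dots> = sum ?g (cell (os @ [o']))"
      proof (rule sum.cong[OF refl])
        fix xo assume "xo \<in> cell (os @ [o'])"
        then have "take (Suc ?k) (snd xo) = os @ [o']"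
          by (simp add: cell_def)
        then show "s xo * \<beta> (fst xo) (snd xo) (extend_play \<sigma> (snd xo) d ((us @ [u]) @ [\<sigma> ?k ?nd]))
            = ?g xo"
          using Suc.prems by simp
      qed
      finally show "marg s (length (os @ [o'])) (os @ [o']) * spay M s \<beta> \<sigma> d ?nd (\<sigma> ?k ?nd) =
          sum ?g (cell (os @ [o']))" .
    qed
    also have "\<dots> = sum ?g (cell os)"
      using Suc.prems by (intro sum_cell_split[symmetric]) simp
    finally show ?thesis .
  qed (simp add: marg_eq_0_iff)
qed

(* This is where HIS enters: on the support, the private history of player i determines the node
   at which rule_of consults sigma. *)
lemma sacts_osupp:
  "xo \<in> osupp s \<Longrightarrow> i < nP M \<Longrightarrow> sacts \<zeta> \<sigma> i (snd xo ! i) = extend_play \<sigma> (snd xo) (Suc i) []"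
proof (induction i)
  case 0
  then have "snd xo \<noteq> []"
    using length_osupp nP_pos by fastforce
  then show ?case
    by (cases "snd xo") auto
next
  case (Suc i)
  then show ?case
    using down_osupp[of xo "Suc i"] lowhists_osupp[of xo "Suc i"]
    by (simp del: extend_play.simps(2) add: Let_def extend_play_Suc_right)
qed

lemma jact_rule_of_osupp:
  assumes "xo \<in> osupp s"
  shows "jact M (rule_of \<zeta> \<sigma>) (snd xo) = extend_play \<sigma> (snd xo) (nP M) []"
proof -
  have "jact M (rule_of \<zeta> \<sigma>) (snd xo) =
      map (\<lambda>i. last (extend_play \<sigma> (snd xo) (Suc i) [])) [0..<nP M]"
    unfolding jact_def rule_of_def
    by (intro map_cong) (simp_all add: sacts_osupp[OF assms] del: extend_play.simps)
  also have "\<dots> = extend_play \<sigma> (snd xo) (nP M) []"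
    by (rule extend_play_Nil_eq_map_last[symmetric])
  finally show ?thesis .
qed

lemma Qbeta_rule_of: "Qbeta M s \<beta> (rule_of \<zeta> \<sigma>) = game_val M s \<beta> \<sigma>"
proof -
  obtain n where n: "nP M = Suc n"
    using nP_pos not0_implies_Suc by blast
  let ?g = "\<lambda>xo. s xo * \<beta> (fst xo) (snd xo) (extend_play \<sigma> (snd xo) (nP M) [])"
  have "Qbeta M s \<beta> (rule_of \<zeta> \<sigma>) = sum ?g (cell [])"
    by (simp add: Qbeta_def cell_Nil jact_rule_of_osupp)
  also have "\<dots> = (\<Sum>o1\<in>hists s 0. sum ?g (cell [o1]))"
    using sum_cell_split[of "[]"] nP_pos by simp
  also have "\<dots> = game_val M s \<beta> \<sigma>"
    unfolding game_val_def payoff_after_def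
  proof (rule sum.cong[OF refl])
    fix o1
    have "sum ?g (cell [o1]) =
        (\<Sum>xo\<in>cell [o1]. s xo * \<beta> (fst xo) (snd xo) (extend_play \<sigma> (snd xo) n ([] @ [\<sigma> 0 ([o1], [])])))"
      by (intro sum.cong) (auto simp: n cell_def)
    also have "\<dots> = marg s 1 [o1] * spay M s \<beta> \<sigma> (nP M - 1 - 0) ([o1], []) (\<sigma> 0 ([o1], []))"
      using marg_mult_spay[of "[o1]" n "[]"] n by simp
    finally show "sum ?g (cell [o1]) =
        marg s 1 [o1] * spay M s \<beta> \<sigma> (nP M - 1 - 0) ([o1], []) (\<sigma> 0 ([o1], []))" .
  qed
  finally show ?thesis .
qed

lemma Qbeta_eq_game_val_rule_strategy: "Qbeta M s \<beta> a = game_val M s \<beta> (rule_strategy a)"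
  using Qbeta_rule_of[of "rule_strategy a"] by (simp add: rule_of_rule_strategy)

lemma Qbeta_le_opt_val: "dr_ok M a \<Longrightarrow> Qbeta M s \<beta> a \<le> opt_val"
  by (simp add: Qbeta_eq_game_val_rule_strategy game_val_le_opt_val strat_ok_rule_strategy)

lemma Qbeta_rule_of_optimal:
  assumes "strat_ok M \<sigma>" "\<forall>\<sigma>'. strat_ok M \<sigma>' \<longrightarrow> game_val M s \<beta> \<sigma>' \<le> game_val M s \<beta> \<sigma>"
    and "dr_ok M a"
  shows "Qbeta M s \<beta> a \<le> Qbeta M s \<beta> (rule_of \<zeta> \<sigma>)"
proof -
  obtain \<sigma>' where "strat_ok M \<sigma>'" "\<forall>i<nP M. \<forall>nd. greedy_at \<sigma>' i nd"
    using ex_greedy_strategy by blast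
  then have "opt_val \<le> game_val M s \<beta> \<sigma>"
    using assms(2) game_val_greedy by metis
  then show ?thesis
    using Qbeta_le_opt_val[OF assms(3)] Qbeta_rule_of by simp
qed

lemma Qbeta_greedy_eq_opt_val:
  assumes greedy: "is_greedy M s \<beta> \<zeta> a"
  shows "Qbeta M s \<beta> a = opt_val"
proof -
  have greedy_at: "greedy_at (rule_strategy a) i
      (lowhists \<zeta> i h, map (\<lambda>j. a j (lowhists \<zeta> i h ! j)) [0..<i])" if "i < nP M" for i h
    using greedy that by (simp add: is_greedy_def greedy_at_def rule_strategy_def Let_def)
  let ?P = "\<lambda>os us u. us @ [u] = map (\<lambda>j. a j (os ! j)) [0..<length os]"
  have "greedy_along (rule_strategy a) ?P"
    unfolding greedy_along_def
  proof (intro allI impI)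
    fix os us u o'
    assume "?P os us u \<and> length os < nP M \<and> marg s (Suc (length os)) (os @ [o']) \<noteq> 0"
    then have "lowhists \<zeta> (length os) o' = os @ [o']"
      and "map (\<lambda>j. a j ((os @ [o']) ! j)) [0..<length os] = us @ [u]"
      and "length os < nP M"
      using lowhists_if_marg_neq_0 by (auto simp: nth_append)
    then show "greedy_at (rule_strategy a) (length os) (os @ [o'], us @ [u]) \<and>
        ?P (os @ [o']) (us @ [u]) (rule_strategy a (length os) (os @ [o'], us @ [u]))"
      using greedy_at[of "length os" o'] by (simp add: rule_strategy_def)
  qed
  then have "game_val M s \<beta> (rule_strategy a) = opt_val"
    using greedy_at[of 0] nP_pos
    by (intro game_val_eq_opt_val_if_greedy_along) (auto simp: rule_strategy_def)
  then show ?thesis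
    by (simp add: Qbeta_eq_game_val_rule_strategy)
qed

end

theorem theorem1:
  fixes M :: "('x,'u,'z) decpomdp"
    and \<zeta> :: "nat \<Rightarrow> 'z \<Rightarrow> 'u \<times> 'z"
    and \<tau> :: nat
    and s :: "'x \<times> ('u,'z) hist list \<Rightarrow> real"
    and \<beta> :: "'x \<Rightarrow> ('u,'z) hist list \<Rightarrow> 'u list \<Rightarrow> real"
  assumes "is_decpomdp M"
    and "his M \<zeta>"
    and "\<tau> < horizon M"
    and "reachable_occ M \<tau> s"
  shows
    "(\<forall>i<nP M. \<forall>nd u. node_ok M s i nd \<and> u \<in> Act M i \<longrightarrow>
        (\<forall>\<sigma>. strat_ok M \<sigma> \<longrightarrow> payoff_after M s \<beta> \<sigma> i nd u \<le> betastar M s \<beta> i nd u) \<and>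
        (\<exists>\<sigma>. strat_ok M \<sigma> \<and> payoff_after M s \<beta> \<sigma> i nd u = betastar M s \<beta> i nd u))
     \<and>
     (let v = (\<Sum>o1\<in>hists s 0. marg s 1 [o1] * Max (betastar M s \<beta> 0 ([o1], []) ` Act M 0)) in
        (\<exists>\<sigma>. strat_ok M \<sigma> \<and> game_val M s \<beta> \<sigma> = v) \<and>
        (\<forall>\<sigma>. strat_ok M \<sigma> \<longrightarrow> game_val M s \<beta> \<sigma> \<le> v) \<and>
        (\<exists>a. dr_ok M a \<and> Qbeta M s \<beta> a = v) \<and>
        (\<forall>a. dr_ok M a \<longrightarrow> Qbeta M s \<beta> a \<le> v))
     \<and>
     (\<forall>\<sigma>. strat_ok M \<sigma> \<and> (\<forall>\<sigma>'. strat_ok M \<sigma>' \<longrightarrow> game_val M s \<beta> \<sigma>' \<le> game_val M s \<beta> \<sigma>) \<longrightarrow>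
        dr_ok M (rule_of \<zeta> \<sigma>) \<and>
        (\<forall>a. dr_ok M a \<longrightarrow> Qbeta M s \<beta> a \<le> Qbeta M s \<beta> (rule_of \<zeta> \<sigma>)))
     \<and>
     (\<forall>a. is_greedy M s \<beta> \<zeta> a \<longrightarrow>
        dr_ok M a \<and> (\<forall>a'. dr_ok M a' \<longrightarrow> Qbeta M s \<beta> a' \<le> Qbeta M s \<beta> a))"
proof -
  interpret his_occupancy M s \<zeta> \<beta>
    using his_occupancy_reachable[OF assms(1,2,4)] .
  obtain \<sigma> where \<sigma>: "strat_ok M \<sigma>" and greedy: "\<forall>i<nP M. \<forall>nd. greedy_at \<sigma> i nd"
    using ex_greedy_strategy by blast
  have "game_val M s \<beta> \<sigma> = opt_val" "dr_ok M (rule_of \<zeta> \<sigma>)" "Qbeta M s \<beta> (rule_of \<zeta> \<sigma>) = opt_val"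
    using game_val_greedy[OF greedy] dr_ok_rule_of[OF \<sigma>] Qbeta_rule_of by simp_all
  then show ?thesis
    unfolding Let_def opt_val_def[symmetric]
    using \<sigma> payoff_after_greedy[OF greedy] payoff_after_le_betastar game_val_le_opt_val
      dr_ok_rule_of Qbeta_le_opt_val Qbeta_rule_of_optimal dr_ok_if_is_greedy Qbeta_greedy_eq_opt_val
    by (auto simp: node_ok_def)
qed

end
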